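(* Let $\star$ be a Weyl star product on $C^\infty(\mathbb R^N)[[\alpha]]$ that is weakly Hermitian and satisfies the stability of unity. Then $\star$ is weakly alternative: for all coordinate indices $i,j,k$, $$x^i\star(x^j\star x^k)-(x^i\star x^j)\star x^k=\tfrac16[x^i,x^j,x^k].$$ More precisely, the associator $A(x^i,x^j,x^k)$ is antisymmetric under exchange of any two of its arguments.
   Context: Work on $\mathbb R^N$ with real coordinates $x^1,\dots,x^N$. Functions are complex-valued smooth functions on $\mathbb R^N$. A star product is a $\mathbb C[[\alpha]]$-bilinear map on $C^\infty(\mathbb R^N)[[\alpha]]$ (formal power series in the real formal parameter $\alpha$). On functions it is given by $f\star g=fg+\sum_{r\ge1}(i\alpha)^rC_r(f,g)$, where the $C_r$ are bilinear bidifferential operators. Complex conjugation ${}^*$ acts coefficientwise on formal series in $\alpha$. Notation: - The associator is $A(f,g,h)=f\star(g\star h)-(f\star g)\star h$. - The star commutator is $[f,g]=f\star g-g\star f$. - The star Jacobiator is $[f,g,h]=[f,[g,h]]+[h,[f,g]]+[g,[h,f]]$. Definitions: - Weyl star product: for every $n\ge1$, all indices $i_1,\dots,i_n$ and all $f$, $$(x^{i_1}\cdots x^{i_n})\star f=\frac1{n!}\sum_{\sigma\in S_n}x^{i_{\sigma(1)}}\star\big(x^{i_{\sigma(2)}}\star(\cdots\star(x^{i_{\sigma(n)}}\star f)\cdots)\big),$$ where $x^{i_1}\cdots x^{i_n}$ denotes the ordinary product. - Weakly Hermitian: $(x^j\star f)^*=f^*\star x^j$ for all $j$ and all $f$. -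 Stability of unity: $f\star1=1\star f=f$ for all $f$. *)

theory Defs
  imports "HOL-Analysis.Analysis" "HOL-Combinatorics.Permutations"
begin

text \<open>Functions on R^N (N = CARD('n)) with complex values, and formal power series
  in the real formal parameter alpha with such coefficients (coefficient n = coefficient of alpha^n).\<close>

type_synonym 'n fn = "real^'n \<Rightarrow> complex"
type_synonym 'n ser = "nat \<Rightarrow> 'n fn"

definition pdiff :: "'n::finite \<Rightarrow> 'n fn \<Rightarrow> 'n fn" where
  "pdiff j f x = vector_derivative (\<lambda>t. f (x + t *\<^sub>R axis j 1)) (at 0)"

fun Dpar :: "'n::finite list \<Rightarrow> 'n fn \<Rightarrow> 'n fn" where
  "Dpar [] f = f"
| "Dpar (j # js) f = pdiff j (Dpar js f)"

definition smooth :: "'n::finite fn \<Rightarrow> bool" where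
  "smooth f \<longleftrightarrow> (\<forall>js. continuous_on UNIV (Dpar js f) \<and>
     (\<forall>j x. ((\<lambda>t. Dpar js f (x + t *\<^sub>R axis j 1)) has_vector_derivative Dpar (j # js) f x) (at 0)))"

definition smooth_ser :: "'n::finite ser \<Rightarrow> bool" where
  "smooth_ser F \<longleftrightarrow> (\<forall>n. smooth (F n))"

definition bidiff :: "('n::finite fn \<Rightarrow> 'n fn \<Rightarrow> 'n fn) \<Rightarrow> bool" where
  "bidiff B \<longleftrightarrow> (\<exists>S c. finite S \<and> (\<forall>p\<in>S. smooth (c p)) \<and>
     (\<forall>f g. smooth f \<longrightarrow> smooth g \<longrightarrow>
        B f g = (\<lambda>x. \<Sum>p\<in>S. c p x * Dpar (fst p) f x * Dpar (snd p) g x)))"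

text \<open>The star product determined by the cochains C r (r >= 1):
  f * g = fg + sum_{r>=1} (i alpha)^r C_r(f,g), extended C[[alpha]]-bilinearly to series.\<close>
definition star :: "(nat \<Rightarrow> 'n fn \<Rightarrow> 'n fn \<Rightarrow> 'n fn) \<Rightarrow> 'n ser \<Rightarrow> 'n ser \<Rightarrow> 'n ser" where
  "star C F G n = (\<lambda>x. (\<Sum>a\<le>n. F a x * G (n - a) x)
      + (\<Sum>r\<in>{1..n}. \<Sum>a\<le>n - r. \<i> ^ r * C r (F a) (G (n - r - a)) x))"

definition fser :: "'n fn \<Rightarrow> 'n ser" where
  "fser f n = (if n = 0 then f else (\<lambda>_. 0))"

definition coord :: "'n::finite \<Rightarrow> 'n ser" where
  "coord j = fser (\<lambda>x. complex_of_real (x $ j))"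

definition one_ser :: "'n ser" where
  "one_ser = fser (\<lambda>_. 1)"

definition conj_ser :: "'n ser \<Rightarrow> 'n ser" where
  "conj_ser F n x = cnj (F n x)"

definition add_ser :: "'n ser \<Rightarrow> 'n ser \<Rightarrow> 'n ser" where
  "add_ser F G n x = F n x + G n x"

definition sub_ser :: "'n ser \<Rightarrow> 'n ser \<Rightarrow> 'n ser" where
  "sub_ser F G n x = F n x - G n x"

definition scale_ser :: "complex \<Rightarrow> 'n ser \<Rightarrow> 'n ser" where
  "scale_ser c F n x = c * F n x"

definition sum_ser :: "('a \<Rightarrow> 'n ser) \<Rightarrow> 'a set \<Rightarrow> 'n ser" where
  "sum_ser H A n x = (\<Sum>a\<in>A. H a n x)"

fun nest :: "(nat \<Rightarrow> 'n fn \<Rightarrow> 'n fn \<Rightarrow> 'n fn) \<Rightarrow> 'n::finite list \<Rightarrow> 'n ser \<Rightarrow> 'n ser" where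
  "nest C [] F = F"
| "nest C (i # is) F = star C (coord i) (nest C is F)"

definition monom :: "'n::finite list \<Rightarrow> 'n ser" where
  "monom is = fser (\<lambda>x. \<Prod>k<length is. complex_of_real (x $ (is ! k)))"

definition weyl :: "(nat \<Rightarrow> 'n::finite fn \<Rightarrow> 'n fn \<Rightarrow> 'n fn) \<Rightarrow> bool" where
  "weyl C \<longleftrightarrow> (\<forall>is F. length is \<ge> 1 \<longrightarrow> smooth_ser F \<longrightarrow>
     star C (monom is) F =
       scale_ser (1 / of_nat (fact (length is)))
         (sum_ser (\<lambda>\<sigma>. nest C (map (\<lambda>k. is ! \<sigma> k) [0..<length is]) F)
                  {\<sigma>. \<sigma> permutes {..<length is}}))"

definition weakly_hermitian :: "(nat \<Rightarrow> 'n::finite fn \<Rightarrow> 'n fn \<Rightarrow> 'n fn) \<Rightarrow> bool" where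
  "weakly_hermitian C \<longleftrightarrow> (\<forall>j F. smooth_ser F \<longrightarrow>
     conj_ser (star C (coord j) F) = star C (conj_ser F) (coord j))"

definition stable_unity :: "(nat \<Rightarrow> 'n::finite fn \<Rightarrow> 'n fn \<Rightarrow> 'n fn) \<Rightarrow> bool" where
  "stable_unity C \<longleftrightarrow> (\<forall>F. smooth_ser F \<longrightarrow> star C F one_ser = F \<and> star C one_ser F = F)"

definition assoc :: "(nat \<Rightarrow> 'n fn \<Rightarrow> 'n fn \<Rightarrow> 'n fn) \<Rightarrow> 'n ser \<Rightarrow> 'n ser \<Rightarrow> 'n ser \<Rightarrow> 'n ser" where
  "assoc C F G H = sub_ser (star C F (star C G H)) (star C (star C F G) H)"

definition comm :: "(nat \<Rightarrow> 'n fn \<Rightarrow> 'n fn \<Rightarrow> 'n fn) \<Rightarrow> 'n ser \<Rightarrow> 'n ser \<Rightarrow> 'n ser" where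
  "comm C F G = sub_ser (star C F G) (star C G F)"

definition jacobiator :: "(nat \<Rightarrow> 'n fn \<Rightarrow> 'n fn \<Rightarrow> 'n fn) \<Rightarrow> 'n ser \<Rightarrow> 'n ser \<Rightarrow> 'n ser \<Rightarrow> 'n ser" where
  "jacobiator C F G H = add_ser (add_ser (comm C F (comm C G H)) (comm C H (comm C F G)))
                                (comm C G (comm C H F))"

end

theory Submission
  imports Defs
begin

text \<open>Stability of unity and the Weyl property applied to \<open>1\<close> give
  \<open>x\<^sup>j x\<^sup>k = (x\<^sup>j \<star> x\<^sup>k + x\<^sup>k \<star> x\<^sup>j) / 2\<close>.  Computing \<open>(x\<^sup>i x\<^sup>j) \<star> x\<^sup>k\<close> once by the Weyl
  property and once from this formula shows that the associator of coordinates is antisymmetric in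
  its first two arguments.  Weak hermiticity gives \<open>(x\<^sup>a \<star> (x\<^sup>b \<star> x\<^sup>c))\<^sup>* = (x\<^sup>c \<star> x\<^sup>b) \<star> x\<^sup>a\<close>,
  so conjugation sends \<open>A(a,b,c)\<close> to \<open>-A(c,b,a)\<close> and transfers the antisymmetry to the last two
  arguments.  For any bilinear product the Jacobiator is the alternating sum of the six associators,
  so a totally antisymmetric associator is one sixth of it.\<close>

lemma Dpar_append: "Dpar (js @ ks) f = Dpar js (Dpar ks f)"
  by (induction js) auto

lemma pdiff_eqI:
  "(\<And>x. ((\<lambda>t. f (x + t *\<^sub>R axis j 1)) has_vector_derivative g x) (at 0)) \<Longrightarrow> pdiff j f = g"
  unfolding pdiff_def by (auto intro!: ext vector_derivative_at)

lemma smooth_continuous_on: "smooth f \<Longrightarrow> continuous_on UNIV f"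
  unfolding smooth_def by (metis Dpar.simps(1))

lemma smooth_has_vector_derivative:
  "smooth f \<Longrightarrow> ((\<lambda>t. f (x + t *\<^sub>R axis j 1)) has_vector_derivative pdiff j f x) (at 0)"
  unfolding smooth_def by (metis Dpar.simps)

lemma smooth_pdiff:
  assumes "smooth f"
  shows "smooth (pdiff j f)"
proof -
  have "Dpar js (pdiff j f) = Dpar (js @ [j]) f" for js
    by (simp add: Dpar_append)
  then show ?thesis
    using assms unfolding smooth_def by (metis append_Cons)
qed

lemma smooth_Dpar: "smooth f \<Longrightarrow> smooth (Dpar js f)"
  by (induction js) (auto intro: smooth_pdiff)

lemma smoothI:
  assumes "continuous_on UNIV f"
    and "\<And>j x. ((\<lambda>t. f (x + t *\<^sub>R axis j 1)) has_vector_derivative g j x) (at 0)"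
    and "\<And>j. smooth (g j)"
  shows "smooth f"
  unfolding smooth_def
proof (intro allI conjI)
  have pdiff_f: "pdiff j f = g j" for j by (rule pdiff_eqI) (fact assms(2))
  fix js :: "'a list" and j x
  have "continuous_on UNIV (Dpar js f) \<and>
      ((\<lambda>t. Dpar js f (x + t *\<^sub>R axis j 1)) has_vector_derivative Dpar (j # js) f x) (at 0)"
  proof (cases js rule: rev_exhaust)
    case Nil
    then show ?thesis using assms(1,2) pdiff_f by simp
  next
    case (snoc ks i)
    then have "Dpar js f = Dpar ks (g i)" "Dpar (j # js) f = Dpar (j # ks) (g i)"
      by (simp_all add: Dpar_append pdiff_f)
    then show ?thesis using assms(3)[of i] unfolding smooth_def by simp
  qed
  then show "continuous_on UNIV (Dpar js f)"
    and "((\<lambda>t. Dpar js f (x + t *\<^sub>R axis j 1)) has_vector_derivative Dpar (j # js) f x) (at 0)"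
    by simp_all
qed

text \<open>Finite sums of products of smooth functions form a class closed under partial
  differentiation (Leibniz rule), hence consisting of smooth functions.\<close>

definition sum_of_products :: "'n::finite fn \<Rightarrow> bool" where
  "sum_of_products h \<longleftrightarrow> (\<exists>L. (\<forall>(f, g)\<in>set L. smooth f \<and> smooth g) \<and>
     h = (\<lambda>x. \<Sum>(f, g)\<leftarrow>L. f x * g x))"

lemma continuous_on_sum_list_products:
  "\<forall>(f, g)\<in>set L. smooth f \<and> smooth g \<Longrightarrow> continuous_on UNIV (\<lambda>x. \<Sum>(f, g)\<leftarrow>L. f x * g x)"
proof (induction L)
  case (Cons p L)
  then show ?case
    by (cases p) (simp add: continuous_on_add continuous_on_mult smooth_continuous_on)
qed simp

lemma has_vector_derivative_sum_list_products:
  "\<forall>(f, g)\<in>set L. smooth f \<and> smooth g \<Longrightarrow>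
   ((\<lambda>t. \<Sum>(f, g)\<leftarrow>L. f (x + t *\<^sub>R axis j 1) * g (x + t *\<^sub>R axis j 1)) has_vector_derivative
     (\<Sum>(f, g)\<leftarrow>L. f x * pdiff j g x + pdiff j f x * g x)) (at 0)"
proof (induction L)
  case (Cons p L)
  obtain f g where p: "p = (f, g)" by fastforce
  have "((\<lambda>t. f (x + t *\<^sub>R axis j 1) * g (x + t *\<^sub>R axis j 1)) has_vector_derivative
      f (x + 0 *\<^sub>R axis j 1) * pdiff j g x + pdiff j f x * g (x + 0 *\<^sub>R axis j 1)) (at 0)"
    using Cons.prems p by (intro has_vector_derivative_mult smooth_has_vector_derivative) auto
  from has_vector_derivative_add[OF this Cons.IH] Cons.prems p show ?case by simp
qed simp

lemma sum_of_products_pdiff: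
  assumes "sum_of_products h"
  obtains h' where "sum_of_products h'"
    and "\<And>x. ((\<lambda>t. h (x + t *\<^sub>R axis j 1)) has_vector_derivative h' x) (at 0)"
proof -
  obtain L where L: "\<forall>(f, g)\<in>set L. smooth f \<and> smooth g"
    and h: "h = (\<lambda>x. \<Sum>(f, g)\<leftarrow>L. f x * g x)"
    using assms unfolding sum_of_products_def by blast
  define L' where "L' = map (\<lambda>(f, g). (f, pdiff j g)) L @ map (\<lambda>(f, g). (pdiff j f, g)) L"
  have "\<forall>(f, g)\<in>set L'. smooth f \<and> smooth g"
    using L unfolding L'_def by (auto intro: smooth_pdiff)
  then have "sum_of_products (\<lambda>x. \<Sum>(f, g)\<leftarrow>L'. f x * g x)"
    unfolding sum_of_products_def by blast
  moreover have "(\<Sum>(f, g)\<leftarrow>L'. f x * g x) = (\<Sum>(f, g)\<leftarrow>L. f x * pdiff j g x + pdiff j f x * g x)" for x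
    unfolding L'_def by (induction L) auto
  ultimately show ?thesis
    using that has_vector_derivative_sum_list_products[OF L] unfolding h by presburger
qed

lemma sum_of_products_Dpar: "sum_of_products h \<Longrightarrow> sum_of_products (Dpar js h)"
proof (induction js)
  case (Cons j js)
  then obtain h' where "sum_of_products h'"
    and "\<And>x. ((\<lambda>t. Dpar js h (x + t *\<^sub>R axis j 1)) has_vector_derivative h' x) (at 0)"
    by (blast elim: sum_of_products_pdiff)
  moreover from this(2) have "Dpar (j # js) h = h'"
    by (simp add: pdiff_eqI)
  ultimately show ?case by simp
qed simp

lemma smooth_sum_of_products:
  assumes "sum_of_products h"
  shows "smooth h"
  unfolding smooth_def
proof (intro allI conjI)
  fix js j x
  obtain L where "\<forall>(f, g)\<in>set L. smooth f \<and> smooth g"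
    and "Dpar js h = (\<lambda>x. \<Sum>(f, g)\<leftarrow>L. f x * g x)"
    using sum_of_products_Dpar[OF assms] unfolding sum_of_products_def by blast
  then show "continuous_on UNIV (Dpar js h)"
    by (simp add: continuous_on_sum_list_products)
  obtain h' where h': "\<And>x. ((\<lambda>t. Dpar js h (x + t *\<^sub>R axis j 1)) has_vector_derivative h' x) (at 0)"
    using sum_of_products_pdiff[OF sum_of_products_Dpar[OF assms], of js j] by blast
  then have "Dpar (j # js) h = h'"
    by (simp add: pdiff_eqI)
  with h' show "((\<lambda>t. Dpar js h (x + t *\<^sub>R axis j 1)) has_vector_derivative Dpar (j # js) h x) (at 0)"
    by simp
qed

lemma smooth_zero: "smooth (\<lambda>_. 0)"
  by (rule smooth_sum_of_products) (auto simp: sum_of_products_def intro: exI[of _ "[]"])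

lemma smooth_const: "smooth (\<lambda>_. c)"
  by (rule smoothI[where g = "\<lambda>_ _. 0"]) (auto intro: smooth_zero)

lemma smooth_coord: "smooth (\<lambda>x. complex_of_real (x $ i))"
proof (rule smoothI[where g = "\<lambda>j _. complex_of_real (axis j 1 $ i)"])
  show "continuous_on UNIV (\<lambda>x. complex_of_real (x $ i))"
    by (intro continuous_intros)
next
  fix j x
  have "((\<lambda>t. complex_of_real (x $ i + t * axis j 1 $ i)) has_vector_derivative
      complex_of_real (axis j 1 $ i)) (at 0)"
    by (rule has_vector_derivative_of_real) (auto intro!: derivative_eq_intros)
  then show "((\<lambda>t. complex_of_real ((x + t *\<^sub>R axis j 1) $ i)) has_vector_derivative
      complex_of_real (axis j 1 $ i)) (at 0)"
    by simp
qed (rule smooth_const)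

lemma smooth_mult:
  assumes "smooth f" "smooth g"
  shows "smooth (\<lambda>x. f x * g x)"
proof (rule smooth_sum_of_products)
  show "sum_of_products (\<lambda>x. f x * g x)"
    unfolding sum_of_products_def using assms by (intro exI[of _ "[(f, g)]"]) simp
qed

lemma smooth_add:
  assumes "smooth f" "smooth g"
  shows "smooth (\<lambda>x. f x + g x)"
proof (rule smooth_sum_of_products)
  show "sum_of_products (\<lambda>x. f x + g x)"
    unfolding sum_of_products_def using assms smooth_const[of 1]
    by (intro exI[of _ "[(f, \<lambda>_. 1), (g, \<lambda>_. 1)]"]) simp
qed

lemma smooth_sum: "(\<And>a. a \<in> A \<Longrightarrow> smooth (f a)) \<Longrightarrow> smooth (\<lambda>x. \<Sum>a\<in>A. f a x)"
proof (induction A rule: infinite_finite_induct)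
  case (insert a A)
  then show ?case by (simp add: smooth_add)
qed (simp_all add: smooth_zero)

lemma smooth_prod: "(\<And>a. a \<in> A \<Longrightarrow> smooth (f a)) \<Longrightarrow> smooth (\<lambda>x. \<Prod>a\<in>A. f a x)"
proof (induction A rule: infinite_finite_induct)
  case (insert a A)
  then show ?case by (simp add: smooth_mult)
qed (simp_all add: smooth_const)

lemma pdiff_linear:
  assumes "smooth f" "smooth g"
  shows "pdiff j (\<lambda>x. a * f x + b * g x) = (\<lambda>x. a * pdiff j f x + b * pdiff j g x)"
  using assms
  by (intro pdiff_eqI has_vector_derivative_add has_vector_derivative_mult_right)
    (auto intro: smooth_has_vector_derivative[simplified])

lemma Dpar_linear:
  assumes "smooth f" "smooth g"
  shows "Dpar js (\<lambda>x. a * f x + b * g x) = (\<lambda>x. a * Dpar js f x + b * Dpar js g x)"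
  by (induction js) (auto simp: pdiff_linear smooth_Dpar assms)

lemma bidiff_smooth:
  assumes "bidiff B" "smooth f" "smooth g"
  shows "smooth (B f g)"
proof -
  obtain S c where "finite S" "\<forall>p\<in>S. smooth (c p)"
    and "B f g = (\<lambda>x. \<Sum>p\<in>S. c p x * Dpar (fst p) f x * Dpar (snd p) g x)"
    using assms unfolding bidiff_def by blast
  then show ?thesis
    using assms(2,3) by (simp add: smooth_sum smooth_mult smooth_Dpar)
qed

lemma bidiff_linear_right:
  assumes "bidiff B" "smooth f" "smooth g" "smooth h"
  shows "B f (\<lambda>x. a * g x + b * h x) = (\<lambda>x. a * B f g x + b * B f h x)"
proof -
  obtain S c where B: "\<And>f g. smooth f \<Longrightarrow> smooth g \<Longrightarrow>
      B f g = (\<lambda>x. \<Sum>p\<in>S. c p x * Dpar (fst p) f x * Dpar (snd p) g x)"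
    using assms(1) unfolding bidiff_def by blast
  have "smooth (\<lambda>x. a * g x + b * h x)"
    using assms by (simp add: smooth_add smooth_mult smooth_const)
  then show ?thesis
    using assms(2-4)
    by (simp add: B Dpar_linear sum_distrib_left flip: sum.distrib) (simp add: algebra_simps)
qed

lemma bidiff_swap:
  assumes "bidiff B"
  shows "bidiff (\<lambda>f g. B g f)"
proof -
  obtain S c where S: "finite S" "\<forall>p\<in>S. smooth (c p)"
    and B: "\<And>f g. smooth f \<Longrightarrow> smooth g \<Longrightarrow>
      B f g = (\<lambda>x. \<Sum>p\<in>S. c p x * Dpar (fst p) f x * Dpar (snd p) g x)"
    using assms unfolding bidiff_def by blast
  have "B g f = (\<lambda>x. \<Sum>p\<in>prod.swap ` S. (c \<circ> prod.swap) p x * Dpar (fst p) f x * Dpar (snd p) g x)"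
    if "smooth f" "smooth g" for f g
    using that by (simp add: B sum.reindex mult.commute mult.left_commute)
  then show ?thesis
    unfolding bidiff_def using S by (intro exI[of _ "prod.swap ` S"] exI[of _ "c \<circ> prod.swap"]) auto
qed

lemma smooth_ser_star:
  assumes "\<And>r. r \<ge> 1 \<Longrightarrow> bidiff (C r)" "smooth_ser F" "smooth_ser G"
  shows "smooth_ser (star C F G)"
  unfolding smooth_ser_def star_def
proof
  fix n
  have "smooth (F a)" "smooth (G a)" for a
    using assms(2,3) unfolding smooth_ser_def by auto
  moreover have "smooth (C r (F a) (G b))" if "r \<ge> 1" for r a b
    using assms(1)[OF that] \<open>\<And>a. smooth (F a)\<close> \<open>\<And>a. smooth (G a)\<close> by (rule bidiff_smooth)
  ultimately show "smooth (\<lambda>x. (\<Sum>a\<le>n. F a x * G (n - a) x)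
      + (\<Sum>r\<in>{1..n}. \<Sum>a\<le>n - r. \<i> ^ r * C r (F a) (G (n - r - a)) x))"
    by (intro smooth_add smooth_sum smooth_mult smooth_const) auto
qed

lemma sum_atMost_flip:
  fixes f :: "nat \<Rightarrow> nat \<Rightarrow> 'a::comm_monoid_add"
  shows "(\<Sum>a\<le>n. f a (n - a)) = (\<Sum>a\<le>n. f (n - a) a)"
  by (rule sum.reindex_bij_witness[where i = "\<lambda>a. n - a" and j = "\<lambda>a. n - a"]) auto

lemma star_swap: "star C F G = star (\<lambda>r f g. C r g f) G F"
proof (intro ext)
  fix n x
  have "(\<Sum>a\<le>n. F a x * G (n - a) x) = (\<Sum>a\<le>n. G a x * F (n - a) x)"
    by (subst sum_atMost_flip) (simp add: mult.commute)
  moreover have "(\<Sum>a\<le>n - r. C r (F a) (G (n - r - a)) x) = (\<Sum>a\<le>n - r. C r (F (n - r - a)) (G a) x)"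
    for r
    by (rule sum_atMost_flip)
  ultimately show "star C F G n x = star (\<lambda>r f g. C r g f) G F n x"
    unfolding star_def by (simp add: sum_distrib_left[symmetric])
qed

lemma star_linear_right:
  assumes "\<And>r. r \<ge> 1 \<Longrightarrow> bidiff (C r)" "smooth_ser F" "smooth_ser G" "smooth_ser H"
  shows "star C F (\<lambda>n x. a * G n x + b * H n x) = (\<lambda>n x. a * star C F G n x + b * star C F H n x)"
proof (intro ext)
  fix n x
  have "C r (F i) (\<lambda>x. a * G m x + b * H m x) = (\<lambda>x. a * C r (F i) (G m) x + b * C r (F i) (H m) x)"
    if "r \<ge> 1" for r i m
    using assms(2-4) unfolding smooth_ser_def by (intro bidiff_linear_right assms(1) that) auto
  then show "star C F (\<lambda>n x. a * G n x + b * H n x) n x = a * star C F G n x + b * star C F H n x"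
    unfolding star_def by (simp add: sum.distrib sum_distrib_left algebra_simps)
qed

lemma star_linear_left:
  assumes "\<And>r. r \<ge> 1 \<Longrightarrow> bidiff (C r)" "smooth_ser F" "smooth_ser G" "smooth_ser H"
  shows "star C (\<lambda>n x. a * G n x + b * H n x) F = (\<lambda>n x. a * star C G F n x + b * star C H F n x)"
  unfolding star_swap[of C]
  by (rule star_linear_right) (use assms bidiff_swap in auto)

lemma sub_ser_eq_linear: "sub_ser G H = (\<lambda>n x. 1 * G n x + (-1) * H n x)"
  by (simp add: sub_ser_def fun_eq_iff)

lemma star_sub_right:
  assumes "\<And>r. r \<ge> 1 \<Longrightarrow> bidiff (C r)" "smooth_ser F" "smooth_ser G" "smooth_ser H"
  shows "star C F (sub_ser G H) = sub_ser (star C F G) (star C F H)"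
  unfolding sub_ser_eq_linear using assms by (rule star_linear_right)

lemma star_sub_left:
  assumes "\<And>r. r \<ge> 1 \<Longrightarrow> bidiff (C r)" "smooth_ser F" "smooth_ser G" "smooth_ser H"
  shows "star C (sub_ser G H) F = sub_ser (star C G F) (star C H F)"
  unfolding sub_ser_eq_linear using assms by (rule star_linear_left)

lemma jacobiator_eq_alternating_assoc:
  assumes bidiff: "\<And>r. r \<ge> 1 \<Longrightarrow> bidiff (C r)"
    and "smooth_ser F" "smooth_ser G" "smooth_ser H"
  shows "jacobiator C F G H n x =
    assoc C F G H n x - assoc C F H G n x + assoc C G H F n x
      - assoc C H G F n x + assoc C H F G n x - assoc C G F H n x"
proof -
  have comm_comm: "comm C P (comm C Q R) =
      sub_ser (sub_ser (star C P (star C Q R)) (star C P (star C R Q)))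
              (sub_ser (star C (star C Q R) P) (star C (star C R Q) P))"
    if "smooth_ser P" "smooth_ser Q" "smooth_ser R" for P Q R
    using that unfolding comm_def
    by (simp add: star_sub_right star_sub_left smooth_ser_star bidiff)
  show ?thesis
    using assms(2-4)
    by (simp add: jacobiator_def comm_comm assoc_def add_ser_def sub_ser_def)
qed

lemma smooth_ser_fser: "smooth f \<Longrightarrow> smooth_ser (fser f)"
  unfolding smooth_ser_def fser_def by (simp add: smooth_zero)

lemma smooth_ser_coord: "smooth_ser (coord i)"
  unfolding coord_def by (intro smooth_ser_fser smooth_coord)

lemma smooth_ser_one: "smooth_ser one_ser"
  unfolding one_ser_def by (intro smooth_ser_fser smooth_const)

lemma smooth_ser_monom: "smooth_ser (monom is)"
  unfolding monom_def by (intro smooth_ser_fser smooth_prod smooth_coord)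

lemma conj_ser_coord: "conj_ser (coord i) = coord i"
  unfolding conj_ser_def coord_def fser_def by (simp add: fun_eq_iff)

lemma id_ne_transpose_0_1: "id \<noteq> Transposition.transpose 0 (1::nat)"
  by (metis id_apply transpose_apply_first zero_neq_one)

lemma permutes_lessThan_two: "{\<sigma>. \<sigma> permutes {..<2::nat}} = {id, Transposition.transpose 0 1}"
proof -
  have "card {id, Transposition.transpose 0 (1::nat)} = 2"
    using id_ne_transpose_0_1 by simp
  moreover have "{id, Transposition.transpose 0 1} \<subseteq> {\<sigma>. \<sigma> permutes {..<2::nat}}"
    by (auto intro: permutes_swap_id)
  moreover have "card {\<sigma>. \<sigma> permutes {..<2::nat}} = 2"
    by (simp add: card_permutations)
  ultimately show ?thesis
    by (metis card_subset_eq finite_permutations finite_lessThan)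
qed

lemma weyl_monom_two:
  assumes "weyl C" "smooth_ser F"
  shows "star C (monom [j, k]) F = (\<lambda>n x.
    1/2 * star C (coord j) (star C (coord k) F) n x + 1/2 * star C (coord k) (star C (coord j) F) n x)"
proof -
  have "star C (monom [j, k]) F = scale_ser (1 / of_nat (fact 2))
      (sum_ser (\<lambda>\<sigma>. nest C (map (\<lambda>i. [j, k] ! \<sigma> i) [0..<2]) F) {id, Transposition.transpose 0 1})"
    using assms unfolding weyl_def permutes_lessThan_two[symmetric]
    by (metis One_nat_def Suc_1 Suc_le_mono le0 length_Cons list.size(3))
  moreover have "map (\<lambda>i. [j, k] ! Transposition.transpose 0 1 i) [0..<2] = [k, j]"
    by (simp add: upt_rec)
  ultimately show ?thesis
    using id_ne_transpose_0_1 by (simp add: scale_ser_def sum_ser_def upt_rec fun_eq_iff field_simps)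
qed

lemma monom_two_eq_symmetrized:
  assumes "weyl C" "stable_unity C"
  shows "monom [j, k] = (\<lambda>n x. 1/2 * star C (coord j) (coord k) n x + 1/2 * star C (coord k) (coord j) n x)"
proof -
  have "monom [j, k] = star C (monom [j, k]) one_ser"
    using assms(2) smooth_ser_monom unfolding stable_unity_def by metis
  moreover have "star C (coord i) one_ser = coord i" for i
    using assms(2) smooth_ser_coord unfolding stable_unity_def by metis
  ultimately show ?thesis
    by (simp add: weyl_monom_two[OF assms(1) smooth_ser_one])
qed

lemma assoc_coord_antisym_12:
  assumes bidiff: "\<And>r. r \<ge> 1 \<Longrightarrow> bidiff (C r)"
    and weyl: "weyl C" and unity: "stable_unity C"
  shows "assoc C (coord j) (coord i) (coord k) n x = - assoc C (coord i) (coord j) (coord k) n x"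
proof -
  let ?P = "\<lambda>a b. star C (coord a) (star C (coord b) (coord k))"
  let ?Q = "\<lambda>a b. star C (star C (coord a) (coord b)) (coord k)"
  have "star C (monom [i, j]) (coord k) n x = 1/2 * ?P i j n x + 1/2 * ?P j i n x"
    by (simp add: weyl_monom_two[OF weyl smooth_ser_coord])
  moreover have "star C (monom [i, j]) (coord k) = (\<lambda>n x. 1/2 * ?Q i j n x + 1/2 * ?Q j i n x)"
    unfolding monom_two_eq_symmetrized[OF weyl unity]
    by (rule star_linear_left) (simp_all add: bidiff smooth_ser_coord smooth_ser_star)
  ultimately have "1/2 * (?P i j n x + ?P j i n x) = 1/2 * (?Q i j n x + ?Q j i n x)"
    by (simp add: distrib_left)
  then have "?P i j n x + ?P j i n x = ?Q i j n x + ?Q j i n x"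
    by (simp only: mult_cancel_left) simp
  then show ?thesis
    unfolding assoc_def sub_ser_def by algebra
qed

lemma cnj_star_coord_star_coord:
  assumes bidiff: "\<And>r. r \<ge> 1 \<Longrightarrow> bidiff (C r)" and herm: "weakly_hermitian C"
  shows "cnj (star C (coord a) (star C (coord b) (coord c)) n x) = star C (star C (coord c) (coord b)) (coord a) n x"
proof -
  have "conj_ser (star C (coord i) F) = star C (conj_ser F) (coord i)" if "smooth_ser F" for i F
    using herm that unfolding weakly_hermitian_def by blast
  then have "conj_ser (star C (coord a) (star C (coord b) (coord c))) = star C (star C (coord c) (coord b)) (coord a)"
    by (simp add: smooth_ser_star smooth_ser_coord bidiff conj_ser_coord)
  then show ?thesis
    unfolding conj_ser_def by metis
qed

lemma cnj_assoc_coord: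
  assumes "\<And>r. r \<ge> 1 \<Longrightarrow> bidiff (C r)" "weakly_hermitian C"
  shows "cnj (assoc C (coord a) (coord b) (coord c) n x) = - assoc C (coord c) (coord b) (coord a) n x"
  using cnj_star_coord_star_coord[OF assms, of a b c n x] cnj_star_coord_star_coord[OF assms, of c b a n x]
  unfolding assoc_def sub_ser_def by (metis complex_cnj_cnj complex_cnj_diff minus_diff_eq)

lemma assoc_coord_antisym_23:
  assumes "\<And>r. r \<ge> 1 \<Longrightarrow> bidiff (C r)" "weyl C" "weakly_hermitian C" "stable_unity C"
  shows "assoc C (coord i) (coord k) (coord j) n x = - assoc C (coord i) (coord j) (coord k) n x"
proof -
  have "assoc C (coord i) (coord k) (coord j) n x = - cnj (assoc C (coord j) (coord k) (coord i) n x)"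
    using cnj_assoc_coord[OF assms(1,3), of j k i n x] by simp
  also have "\<dots> = cnj (assoc C (coord k) (coord j) (coord i) n x)"
    using assoc_coord_antisym_12[OF assms(1,2,4), of k j i n x] by simp
  also have "\<dots> = - assoc C (coord i) (coord j) (coord k) n x"
    by (rule cnj_assoc_coord[OF assms(1,3)])
  finally show ?thesis .
qed

lemma alternating_sum_of_antisymmetric:
  fixes A :: "'i \<Rightarrow> 'i \<Rightarrow> 'i \<Rightarrow> 'a::comm_ring_1"
  assumes swap12: "\<And>a b c. A b a c = - A a b c"
    and swap23: "\<And>a b c. A a c b = - A a b c"
  shows "A c b a = - A a b c"
    and "A a b c - A a c b + A b c a - A c b a + A c a b - A b a c = 6 * A a b c"
proof -
  show swap13: "A c b a = - A a b c"
    using swap12[of b c a] swap23[of b a c] swap12[of a b c] by simp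
  moreover have "A b c a = A a b c"
    using swap12[of c b a] swap13 by simp
  moreover have "A c a b = A a b c"
    using swap23[of c b a] swap13 by simp
  ultimately
  show "A a b c - A a c b + A b c a - A c b a + A c a b - A b a c = 6 * A a b c"
    using swap12[of a b c] swap23[of a b c] by (simp add: algebra_simps)
qed

theorem proposition1:
  fixes C :: "nat \<Rightarrow> (real^'n::finite \<Rightarrow> complex) \<Rightarrow> (real^'n \<Rightarrow> complex) \<Rightarrow> (real^'n \<Rightarrow> complex)"
  assumes bidiff: "\<And>r. r \<ge> 1 \<Longrightarrow> bidiff (C r)"
    and weyl: "weyl C"
    and herm: "weakly_hermitian C"
    and unity: "stable_unity C"
  shows "\<forall>i j k.
      assoc C (coord i) (coord j) (coord k)
        = scale_ser (1/6) (jacobiator C (coord i) (coord j) (coord k))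
    \<and> assoc C (coord j) (coord i) (coord k) = scale_ser (-1) (assoc C (coord i) (coord j) (coord k))
    \<and> assoc C (coord i) (coord k) (coord j) = scale_ser (-1) (assoc C (coord i) (coord j) (coord k))
    \<and> assoc C (coord k) (coord j) (coord i) = scale_ser (-1) (assoc C (coord i) (coord j) (coord k))"
proof (intro allI conjI)
  fix i j k
  let ?A = "\<lambda>a b c. assoc C (coord a) (coord b) (coord c)"
  have swap12: "?A j i k n x = - ?A i j k n x" for i j k n x
    by (rule assoc_coord_antisym_12[OF bidiff weyl unity])
  have swap23: "?A i k j n x = - ?A i j k n x" for i j k n x
    by (rule assoc_coord_antisym_23[OF bidiff weyl herm unity])
  have swap13: "?A k j i n x = - ?A i j k n x"
    and six: "?A i j k n x - ?A i k j n x + ?A j k i n x - ?A k j i n x + ?A k i j n x - ?A j i k n x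
      = 6 * ?A i j k n x" for n x
    using alternating_sum_of_antisymmetric[where A = "\<lambda>a b c. ?A a b c n x" and a = i and b = j and c = k,
        OF swap12 swap23]
    by simp_all
  show "?A i j k = scale_ser (1/6) (jacobiator C (coord i) (coord j) (coord k))"
    by (simp add: fun_eq_iff scale_ser_def jacobiator_eq_alternating_assoc bidiff smooth_ser_coord six)
  show "?A j i k = scale_ser (-1) (?A i j k)"
    and "?A i k j = scale_ser (-1) (?A i j k)"
    and "?A k j i = scale_ser (-1) (?A i j k)"
    by (simp_all add: fun_eq_iff scale_ser_def swap12[of j i] swap23[of i k] swap13)
qed

end
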